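(* Let $n\ge2$, $R_0>0$, $X\subset\mathbb R^n$, and $U:=\{x\in\mathbb R^n:\operatorname{dist}(x,X)\le R_0\}$. Let $N\ge1$ be an integer, $0<R\le3^{1-N}R_0$, and let $B_j=\overline B_R(x_j)$, $1\le j\le N$, be (not necessarily disjoint) closed balls with $x_j\in X$. For $x\in X$ and $0<r\le R_0$ set $J(x,r):=\{j:B_j\subset B_r(x)\}$. Let $\lambda_1,\dots,\lambda_N\ge0$, and let $h\ge0$ be a Borel function on $U\setminus\bigcup_jB_j$ such that for all $x\in X$ and $0<r\le R_0$: if $S_r(x)\cap B_j=\emptyset$ for all $j$, then $\int_{S_r(x)}h\ge\frac1r\sum_{j\in J(x,r)}\lambda_j$. Then $$\int_{U\setminus\bigcup_jB_j}h\ge\left(\ln\frac{R_0}{3^{N-1}R}\right)\sum_j\lambda_j.$$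
   Context: $B_r(x)$ is the open ball and $S_r(x)$ the sphere of radius $r$ centered at $x$; integrals over $S_r(x)$ are with respect to surface measure. *)

theory Defs
  imports "HOL-Analysis.Analysis"
begin

text \<open>Surface measure on the sphere S_r(x) in an n-dimensional Euclidean space
(n = DIM('a)), defined as the normalized cone measure: for A \<subseteq> S_r(x),
sigma(A) = (n / r) * Lebesgue measure of the cone {x + t (y - x) : 0 < t \<le> 1, y \<in> A}.\<close>

definition sphere_measure :: "'a::euclidean_space \<Rightarrow> real \<Rightarrow> 'a measure" where
  "sphere_measure x r =
     density
       (distr (restrict_space lborel (ball x r - {x})) (restrict_space borel (sphere x r))
          (\<lambda>y. x + (r / norm (y - x)) *\<^sub>R (y - x)))
       (\<lambda>_. ennreal (real DIM('a) / r))"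

definition sphere_integral :: "('a::euclidean_space \<Rightarrow> real) \<Rightarrow> 'a \<Rightarrow> real \<Rightarrow> ennreal" where
  "sphere_integral h x r = (\<integral>\<^sup>+ y. ennreal (h y) \<partial>sphere_measure x r)"

end

theory Submission
  imports Defs
begin

text \<open>
  In polar coordinates around a centre \<open>x \<in> X\<close>, the sphere hypothesis integrates over an
  annulus \<open>a < |y - x| < b\<close> whose spheres miss all balls \<open>B\<^sub>j\<close> to a mass of at least
  \<open>L ln (b / a)\<close>, where \<open>L\<close> is the total weight of the balls inside radius \<open>a\<close>.
  The balls are grouped into clusters, each enclosed in a ball \<open>B(c\<^sub>i, \<rho>\<^sub>i)\<close> with
  \<open>c\<^sub>i \<in> X\<close>. Inflating all cluster balls by a common factor \<open>t \<ge> 1\<close> until two of them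
  touch (or the radius reaches \<open>R\<^sub>0\<close>) leaves disjoint annuli that contribute
  \<open>(\<Sum>\<^sub>j \<lambda>\<^sub>j) ln t\<close> together; the two touching clusters are then merged into one ball of
  radius \<open>t (\<rho>\<^sub>a + 2\<rho>\<^sub>b) \<le> 3 t max \<rho>\<close>. By induction on the number \<open>k\<close> of clusters, the
  mass of \<open>h\<close> outside the cluster balls is at least \<open>(\<Sum>\<^sub>j \<lambda>\<^sub>j) ln (R\<^sub>0 / (3\<^bsup>k-1\<^esup> max \<rho>))\<close>;
  the theorem is the case of the \<open>N\<close> singleton clusters \<open>B\<^sub>j\<close>.
\<close>

lemma nn_integral_lborel_affine:
  fixes f :: "'a::euclidean_space \<Rightarrow> ennreal"
  assumes [measurable]: "f \<in> borel_measurable borel" and c: "c \<noteq> 0"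
  shows "(\<integral>\<^sup>+x. f x \<partial>lborel) = ennreal (\<bar>c\<bar> ^ DIM('a)) * (\<integral>\<^sup>+x. f (t + c *\<^sub>R x) \<partial>lborel)"
  by (subst lborel_affine[OF c, of t])
     (simp add: nn_integral_density nn_integral_distr nn_integral_cmult)

definition radial_density :: "nat \<Rightarrow> real \<Rightarrow> ennreal" where
  "radial_density n r = indicator {0<..} r * ennreal (real n * r ^ (n - 1))"

lemma radial_density_borel_measurable [measurable]: "radial_density n \<in> borel_measurable borel"
  unfolding radial_density_def by measurable

lemma emeasure_radial_density_lessThan:
  assumes n: "n \<ge> 1"
  shows "emeasure (density lborel (radial_density n)) {..<b} = ennreal (max b 0 ^ n)"
proof -
  have "emeasure (density lborel (radial_density n)) {..<b}
      = (\<integral>\<^sup>+r. radial_density n r * indicator {..<b} r \<partial>lborel)"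
    by (simp add: emeasure_density)
  also have "\<dots> = (\<integral>\<^sup>+r. ennreal (real n * r ^ (n - 1)) * indicator {0..max b 0} r \<partial>lborel)"
    using AE_lborel_singleton[of 0] AE_lborel_singleton[of b]
    by (intro nn_integral_cong_AE, eventually_elim) (auto simp: radial_density_def indicator_def)
  also have "\<dots> = ennreal (max b 0 ^ n - 0 ^ n)"
    by (rule nn_integral_FTC_Icc) (auto intro!: derivative_eq_intros)
  finally show ?thesis
    using n by simp
qed

lemma emeasure_cone_norm_less:
  fixes S :: "'a::euclidean_space set"
  assumes S: "S \<in> sets borel" and cone: "\<And>y t. 0 < t \<Longrightarrow> t *\<^sub>R y \<in> S \<longleftrightarrow> y \<in> S"
  shows "emeasure lborel (S \<inter> {y. norm y < s})
    = ennreal (max s 0 ^ DIM('a)) * emeasure lborel (S \<inter> ball 0 1)"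
proof (cases "s > 0")
  case False
  then have "S \<inter> {y. norm y < s} = {}"
    by (auto dest: order.strict_trans1[OF norm_ge_zero])
  then show ?thesis
    using False by simp
next
  case True
  have "emeasure lborel (S \<inter> {y. norm y < s}) = (\<integral>\<^sup>+y. indicator (S \<inter> {y. norm y < s}) y \<partial>lborel)"
    using S by simp
  also have "\<dots> = ennreal (\<bar>s\<bar> ^ DIM('a)) * (\<integral>\<^sup>+z. indicator (S \<inter> {y. norm y < s}) (0 + s *\<^sub>R z) \<partial>lborel)"
    using S True by (intro nn_integral_lborel_affine) auto
  also have "(\<lambda>z. indicator (S \<inter> {y. norm y < s}) (0 + s *\<^sub>R z) :: ennreal) = indicator (S \<inter> ball 0 1)"
    using True cone[OF True] by (auto simp: indicator_def)
  finally show ?thesis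
    using S True by simp
qed

lemma emeasure_norm_sgn_rectangle:
  assumes A: "A \<in> sets borel" and B: "B \<in> sets borel"
  shows "emeasure lborel {y::'a::euclidean_space. norm y \<in> A \<and> sgn y \<in> B}
    = emeasure (density lborel (radial_density DIM('a))) A * emeasure lborel (sgn -` B \<inter> ball 0 1)"
proof -
  define S where "S = sgn -` B"
  define c where "c = emeasure lborel (S \<inter> ball 0 1)"
  have S [measurable]: "S \<in> sets borel"
    using measurable_sets[OF borel_measurable_sgn B] by (simp add: S_def)
  have cone: "t *\<^sub>R y \<in> S \<longleftrightarrow> y \<in> S" if "t > 0" for t y
    using that by (simp add: S_def sgn_scaleR)
  have c_finite: "c \<noteq> \<infinity>"
  proof -
    have "c \<le> emeasure lborel (ball (0::'a) 1)"
      unfolding c_def by (intro emeasure_mono) auto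
    then show ?thesis
      using emeasure_lborel_ball_finite[of "0::'a" 1] by (auto simp: top_unique)
  qed
  define N1 where "N1 = distr (density lborel (indicator S)) (borel :: real measure) norm"
  define N2 where "N2 = density (density lborel (radial_density DIM('a))) (\<lambda>_. c)"
  have N1_eq: "emeasure N1 X = emeasure lborel (S \<inter> {y. norm y \<in> X})" if [measurable]: "X \<in> sets borel" for X
  proof -
    have "emeasure N1 X = emeasure (density lborel (indicator S)) (norm -` X)"
      unfolding N1_def by (subst emeasure_distr) auto
    also have "\<dots> = emeasure lborel (S \<inter> {y. norm y \<in> X})"
      by (subst emeasure_restricted) (auto simp: vimage_def)
    finally show ?thesis .
  qed
  have N2_eq: "emeasure N2 X = c * emeasure (density lborel (radial_density DIM('a))) X" if "X \<in> sets borel" for X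
    unfolding N2_def using that by (simp add: emeasure_density_const)
  have "N1 = N2" \<comment> \<open>both sides as measures in \<open>A\<close> agree on half-lines \<open>{..<b}\<close>, by scaling\<close>
  proof (rule measure_eqI_generator_eq[where E="range lessThan" and \<Omega>=UNIV and A="\<lambda>i. {..<real i}"])
    show "Int_stable (range (lessThan :: real \<Rightarrow> real set))"
      by (auto simp: Int_stable_def intro: range_eqI[of _ _ "min _ _"])
    show "emeasure N1 X = emeasure N2 X" if "X \<in> range lessThan" for X
      using that emeasure_cone_norm_less[OF S cone] emeasure_radial_density_lessThan[of "DIM('a)" for b]
      by (auto simp: N1_eq N2_eq c_def DIM_positive Suc_le_eq mult.commute)
    show "sets N1 = sigma_sets UNIV (range lessThan)" "sets N2 = sigma_sets UNIV (range lessThan)"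
      by (simp_all add: N1_def N2_def borel_Iio)
    show "emeasure N1 {..<real i} \<noteq> \<infinity>" for i
      using emeasure_cone_norm_less[OF S cone] c_finite by (simp add: N1_eq c_def ennreal_mult_eq_top_iff)
  qed (auto intro: reals_Archimedean2)
  then show ?thesis
    using A N1_eq[OF A] N2_eq[OF A] by (simp add: S_def c_def Int_def conj_commute mult.commute)
qed

lemma norm_scaleR_sgn: "norm y *\<^sub>R sgn y = (y::'a::real_normed_vector)"
  by (cases "y = 0") (simp_all add: sgn_div_norm)

lemma sigma_finite_density_radial: "sigma_finite_measure (density lborel (radial_density n))"
  by (subst sigma_finite_measure.sigma_finite_iff_density_finite[OF sigma_finite_lborel])
     (auto simp: radial_density_def indicator_def)

lemma emeasure_distr_sgn_ball:
  assumes "B \<in> sets borel"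
  shows "emeasure (distr (density lborel (indicator (ball 0 1))) borel sgn) B
    = emeasure lborel (sgn -` B \<inter> ball (0::'a::euclidean_space) 1)"
proof -
  have "sgn -` B \<in> sets (borel :: 'a measure)"
    using measurable_sets[OF borel_measurable_sgn assms] by simp
  then show ?thesis
    using assms by (simp add: emeasure_distr emeasure_restricted Int_commute)
qed

lemma sigma_finite_distr_sgn_ball:
  "sigma_finite_measure (distr (density lborel (indicator (ball (0::'a::euclidean_space) 1))) borel sgn)"
proof -
  have "emeasure lborel (sgn -` UNIV \<inter> ball (0::'a) 1) < \<infinity>"
    using emeasure_lborel_ball_finite[of "0::'a" 1] by simp
  then have "finite_measure (distr (density lborel (indicator (ball (0::'a) 1))) borel sgn)"
    by (intro finite_measureI) (simp add: emeasure_distr_sgn_ball)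
  then show ?thesis
    by (simp add: finite_measure_def)
qed

lemma distr_norm_sgn_lborel:
  "distr lborel (borel \<Otimes>\<^sub>M borel) (\<lambda>y::'a::euclidean_space. (norm y, sgn y))
    = density lborel (radial_density DIM('a)) \<Otimes>\<^sub>M distr (density lborel (indicator (ball (0::'a) 1))) borel sgn"
proof (rule pair_measure_eqI[symmetric, OF sigma_finite_density_radial
      sigma_finite_distr_sgn_ball])
  show "emeasure (density lborel (radial_density DIM('a))) A
      * emeasure (distr (density lborel (indicator (ball (0::'a) 1))) borel sgn) B
    = emeasure (distr lborel (borel \<Otimes>\<^sub>M borel) (\<lambda>y::'a. (norm y, sgn y))) (A \<times> B)"
    if "A \<in> sets (density lborel (radial_density DIM('a)))"
      "B \<in> sets (distr (density lborel (indicator (ball (0::'a) 1))) borel sgn)" for A B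
    using that
    by (subst emeasure_distr_sgn_ball) (simp_all add: emeasure_distr vimage_def emeasure_norm_sgn_rectangle)
qed (simp cong: sets_pair_measure_cong)

lemma nn_integral_polar:
  fixes g :: "'a::euclidean_space \<Rightarrow> ennreal"
  assumes [measurable]: "g \<in> borel_measurable borel"
  shows "(\<integral>\<^sup>+y. g y \<partial>lborel) = (\<integral>\<^sup>+z. indicator (ball 0 1) z *
      (\<integral>\<^sup>+r. radial_density DIM('a) r * g (x + r *\<^sub>R sgn z) \<partial>lborel) \<partial>lborel)"
proof -
  define M1 where "M1 = density lborel (radial_density DIM('a))"
  define M2 where "M2 = distr (density lborel (indicator (ball (0::'a) 1))) borel sgn"
  have sets_M1 [measurable_cong]: "sets M1 = sets borel" and sets_M2 [measurable_cong]: "sets M2 = sets borel"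
    by (simp_all add: M1_def M2_def)
  interpret pair_sigma_finite M1 M2
    unfolding pair_sigma_finite_def M1_def M2_def
    using sigma_finite_density_radial sigma_finite_distr_sgn_ball by blast
  have "(\<integral>\<^sup>+y. g y \<partial>lborel) = (\<integral>\<^sup>+y. g (x + y) \<partial>lborel)"
    using nn_integral_lborel_affine[of g 1 x] by simp
  also have "\<dots> = (\<integral>\<^sup>+p. g (x + fst p *\<^sub>R snd p) \<partial>distr lborel (borel \<Otimes>\<^sub>M borel) (\<lambda>y::'a. (norm y, sgn y)))"
    by (simp add: nn_integral_distr norm_scaleR_sgn)
  also have "\<dots> = (\<integral>\<^sup>+u. (\<integral>\<^sup>+r. g (x + r *\<^sub>R u) \<partial>M1) \<partial>M2)"
    unfolding distr_norm_sgn_lborel M1_def[symmetric] M2_def[symmetric]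
    by (subst nn_integral_snd[symmetric]) (simp_all add: case_prod_beta')
  also have "\<dots> = (\<integral>\<^sup>+z. indicator (ball 0 1) z * (\<integral>\<^sup>+r. g (x + r *\<^sub>R sgn z) \<partial>M1) \<partial>lborel)"
  proof -
    have "(\<lambda>z. \<integral>\<^sup>+r. g (x + r *\<^sub>R z) \<partial>M1) \<in> borel_measurable borel"
      and "(\<lambda>z. \<integral>\<^sup>+r. g (x + r *\<^sub>R sgn z) \<partial>M1) \<in> borel_measurable borel"
      by measurable
    then show ?thesis
      unfolding M2_def by (simp add: nn_integral_distr, subst nn_integral_density) (auto intro: borel_measurable_indicator)
  qed
  finally show ?thesis
    by (simp add: M1_def nn_integral_density)
qed

lemma nn_integral_sphere_measure:
  fixes g :: "'a::euclidean_space \<Rightarrow> ennreal"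
  assumes [measurable]: "g \<in> borel_measurable borel" and r: "0 < r"
  shows "(\<integral>\<^sup>+y. g y \<partial>sphere_measure x r) =
    (\<integral>\<^sup>+z. indicator (ball 0 1) z * (radial_density DIM('a) r * g (x + r *\<^sub>R sgn z)) \<partial>lborel)"
proof -
  let ?n = "DIM('a)"
  define P where "P y = x + (r / norm (y - x)) *\<^sub>R (y - x)" for y
  define \<Omega> where "\<Omega> = ball x r - {x}"
  define k where "k = ennreal (real ?n / r)"
  have [measurable]: "\<Omega> \<in> sets borel"
    unfolding \<Omega>_def by auto
  have [measurable]: "P \<in> borel_measurable borel"
    unfolding P_def by measurable
  have P_sphere: "P \<in> measurable (restrict_space lborel \<Omega>) (restrict_space borel (sphere x r))"
    using r by (intro measurable_restrict_space2 measurable_restrict_space1)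
      (auto simp: P_def \<Omega>_def space_restrict_space dist_norm norm_minus_commute)
  have g_sphere: "g \<in> borel_measurable (restrict_space borel (sphere x r))"
    by (intro measurable_restrict_space1) simp
  have "(\<integral>\<^sup>+y. g y \<partial>sphere_measure x r) = (\<integral>\<^sup>+y. k * g (P y) * indicator \<Omega> y \<partial>lborel)"
    unfolding sphere_measure_def P_def[symmetric] \<Omega>_def[symmetric] k_def
    using g_sphere P_sphere
    by (simp add: nn_integral_density nn_integral_distr nn_integral_restrict_space)
  also have "\<dots> = ennreal (\<bar>r\<bar> ^ ?n) * (\<integral>\<^sup>+z. k * g (P (x + r *\<^sub>R z)) * indicator \<Omega> (x + r *\<^sub>R z) \<partial>lborel)"
    using r by (intro nn_integral_lborel_affine) auto
  also have "\<dots> = (\<integral>\<^sup>+z. ennreal (\<bar>r\<bar> ^ ?n) * (k * g (P (x + r *\<^sub>R z)) * indicator \<Omega> (x + r *\<^sub>R z)) \<partial>lborel)"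
    by (intro nn_integral_cmult[symmetric]) auto
  also have "\<dots> = (\<integral>\<^sup>+z. indicator (ball 0 1) z * (radial_density ?n r * g (x + r *\<^sub>R sgn z)) \<partial>lborel)"
  proof (intro nn_integral_cong_AE)
    \<comment> \<open>rescaling the cone to the unit ball turns the density \<open>n / r\<close> into \<open>r\<^sup>n n / r\<close>\<close>
    have "\<bar>r\<bar> ^ ?n * (real ?n / r) = real ?n * r ^ (?n - 1)"
      using r DIM_positive[where 'a='a] by (cases ?n) (simp_all add: field_simps)
    then have scale: "ennreal (\<bar>r\<bar> ^ ?n) * k = radial_density ?n r"
      using r by (simp add: k_def radial_density_def ennreal_mult[symmetric])
    show "AE z in lborel. ennreal (\<bar>r\<bar> ^ ?n) * (k * g (P (x + r *\<^sub>R z)) * indicator \<Omega> (x + r *\<^sub>R z))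
        = indicator (ball 0 1) z * (radial_density ?n r * g (x + r *\<^sub>R sgn z))"
      using AE_lborel_singleton[of "0::'a"]
    proof eventually_elim
      case (elim z)
      then have "P (x + r *\<^sub>R z) = x + r *\<^sub>R sgn z"
        using r by (simp add: P_def sgn_div_norm field_simps)
      moreover have "indicator \<Omega> (x + r *\<^sub>R z) = (indicator (ball 0 1) z :: ennreal)"
        using r elim by (auto simp: \<Omega>_def indicator_def dist_norm)
      ultimately show ?case
        by (simp add: scale[symmetric] mult_ac)
    qed
  qed
  finally show ?thesis .
qed

lemma borel_measurable_sphere_measure:
  "g \<in> borel_measurable borel \<Longrightarrow> g \<in> borel_measurable (sphere_measure x r)"
  unfolding sphere_measure_def by (simp add: measurable_restrict_space1)

lemma nn_integral_polar_sphere_measure: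
  fixes g :: "'a::euclidean_space \<Rightarrow> ennreal"
  assumes [measurable]: "g \<in> borel_measurable borel"
  shows "(\<integral>\<^sup>+y. g y \<partial>lborel) = (\<integral>\<^sup>+r. indicator {0<..} r * (\<integral>\<^sup>+y. g y \<partial>sphere_measure x r) \<partial>lborel)"
proof -
  define F where "F r z = indicator (ball 0 1) z * (radial_density DIM('a) r * g (x + r *\<^sub>R sgn z))" for r z
  have [measurable]: "ball (0::'a) 1 \<in> sets borel"
    by simp
  have F_measurable: "(\<lambda>(r, z). F r z) \<in> borel_measurable (lborel \<Otimes>\<^sub>M lborel)"
  proof -
    have [measurable]: "(\<lambda>p::real \<times> 'a. g (x + fst p *\<^sub>R sgn (snd p))) \<in> borel_measurable (borel \<Otimes>\<^sub>M borel)"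
      by measurable
    have "(\<lambda>p::real \<times> 'a. F (fst p) (snd p)) \<in> borel_measurable (borel \<Otimes>\<^sub>M borel)"
      unfolding F_def by measurable
    then show ?thesis
      by (simp add: case_prod_beta' cong: measurable_cong_sets sets_pair_measure_cong)
  qed
  have "(\<lambda>r. radial_density DIM('a) r * g (x + r *\<^sub>R sgn z)) \<in> borel_measurable borel" for z
    by measurable
  then have "(\<integral>\<^sup>+y. g y \<partial>lborel) = (\<integral>\<^sup>+z. (\<integral>\<^sup>+r. F r z \<partial>lborel) \<partial>lborel)"
    by (simp add: nn_integral_polar[of g x] F_def nn_integral_cmult)
  also have "\<dots> = (\<integral>\<^sup>+r. (\<integral>\<^sup>+z. F r z \<partial>lborel) \<partial>lborel)"
    using lborel_pair.Fubini'[OF F_measurable] by simp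
  also have "\<dots> = (\<integral>\<^sup>+r. indicator {0<..} r * (\<integral>\<^sup>+y. g y \<partial>sphere_measure x r) \<partial>lborel)"
  proof (intro nn_integral_cong)
    fix r :: real
    show "(\<integral>\<^sup>+z. F r z \<partial>lborel) = indicator {0<..} r * (\<integral>\<^sup>+y. g y \<partial>sphere_measure x r)"
      by (cases "r > 0") (simp_all add: F_def nn_integral_sphere_measure radial_density_def)
  qed
  finally show ?thesis .
qed

lemma nn_integral_annulus:
  fixes g :: "'a::euclidean_space \<Rightarrow> ennreal"
  assumes [measurable]: "g \<in> borel_measurable borel" and a: "0 \<le> a"
  shows "(\<integral>\<^sup>+y. g y * indicator {y. a < dist x y \<and> dist x y < b} y \<partial>lborel) =
    (\<integral>\<^sup>+r. indicator {a<..<b} r * (\<integral>\<^sup>+y. g y \<partial>sphere_measure x r) \<partial>lborel)"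
proof -
  define A where "A = {y. a < dist x y \<and> dist x y < b}"
  have [measurable]: "A \<in> sets borel"
    unfolding A_def by measurable
  have "(\<integral>\<^sup>+y. g y * indicator A y \<partial>lborel)
      = (\<integral>\<^sup>+r. indicator {0<..} r * (\<integral>\<^sup>+y. g y * indicator A y \<partial>sphere_measure x r) \<partial>lborel)"
    by (rule nn_integral_polar_sphere_measure) measurable
  also have "\<dots> = (\<integral>\<^sup>+r. indicator {a<..<b} r * (\<integral>\<^sup>+y. g y \<partial>sphere_measure x r) \<partial>lborel)"
  proof (rule nn_integral_cong)
    fix r :: real
    have "(\<integral>\<^sup>+y. g y * indicator A y \<partial>sphere_measure x r) = (\<integral>\<^sup>+y. g y * indicator {a<..<b} r \<partial>sphere_measure x r)"
      by (intro nn_integral_cong) (simp add: A_def sphere_measure_def indicator_def)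
    also have "\<dots> = (\<integral>\<^sup>+y. g y \<partial>sphere_measure x r) * indicator {a<..<b} r"
      using borel_measurable_sphere_measure[of g] by (simp add: nn_integral_multc)
    finally show "indicator {0<..} r * (\<integral>\<^sup>+y. g y * indicator A y \<partial>sphere_measure x r)
        = indicator {a<..<b} r * (\<integral>\<^sup>+y. g y \<partial>sphere_measure x r)"
      using a by (simp add: indicator_def)
  qed
  finally show ?thesis
    by (simp add: A_def)
qed

lemma nn_integral_inverse_Ioo:
  assumes a: "0 < a" and ab: "a \<le> b" and L: "0 \<le> L"
  shows "(\<integral>\<^sup>+r. indicator {a<..<b} r * ennreal (L / r) \<partial>lborel) = ennreal (L * ln (b / a))"
proof -
  have "(\<integral>\<^sup>+r. indicator {a<..<b} r * ennreal (L / r) \<partial>lborel) =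
      (\<integral>\<^sup>+r. ennreal (L / r) * indicator {a..b} r \<partial>lborel)"
    using AE_lborel_singleton[of a] AE_lborel_singleton[of b]
    by (intro nn_integral_cong_AE, eventually_elim) (auto simp: indicator_def)
  also have "\<dots> = ennreal (L * ln b - L * ln a)"
    using a L by (intro nn_integral_FTC_Icc ab) (auto intro!: derivative_eq_intros simp: field_simps)
  finally show ?thesis
    using a ab by (simp add: ln_div right_diff_distrib)
qed

lemma ball_Int_cball_eq_empty:
  assumes "r + s \<le> dist x y"
  shows "ball x r \<inter> cball y s = {}"
proof -
  have False if "dist x z < r" "dist y z \<le> s" for z
    using dist_triangle[of x y z] dist_commute[of z y] that assms by linarith
  then show ?thesis
    by auto
qed

lemma set_nn_integral_UN_disjoint:
  assumes "finite I" "f \<in> borel_measurable M" "\<And>i. i \<in> I \<Longrightarrow> A i \<in> sets M" "disjoint_family_on A I"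
  shows "(\<integral>\<^sup>+x\<in>(\<Union>i\<in>I. A i). f x \<partial>M) = (\<Sum>i\<in>I. \<integral>\<^sup>+x\<in>A i. f x \<partial>M)"
proof -
  have "(\<Sum>i\<in>I. \<integral>\<^sup>+x\<in>A i. f x \<partial>M) = (\<integral>\<^sup>+x. f x * (\<Sum>i\<in>I. indicator (A i) x) \<partial>M)"
    using assms by (subst nn_integral_sum[symmetric]) (auto simp: sum_distrib_left)
  then show ?thesis
    using assms by (simp add: indicator_UN_disjoint)
qed

lemma ennreal_mult_ln_le_add:
  fixes L t x y :: real
  assumes L: "0 \<le> L" and t: "1 \<le> t" and x: "0 < x" and y: "0 < y" and xy: "x \<le> t * y"
  shows "ennreal (L * ln x) \<le> ennreal (L * ln t) + ennreal (L * ln y)"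
proof -
  have "ln x \<le> ln (t * y)"
    using t x y xy by simp
  also have "\<dots> = ln t + ln y"
    using t y by (simp add: ln_mult)
  finally have "ln x \<le> ln t + ln y" .
  then have "L * ln x \<le> L * ln t + L * ln y"
    using L by (simp add: distrib_left[symmetric] mult_left_mono)
  then have "ennreal (L * ln x) \<le> ennreal (L * ln t + L * ln y)"
    by (rule ennreal_leI)
  also have "\<dots> \<le> ennreal (L * ln t) + ennreal (L * ln y)"
  proof (cases "L * ln y \<ge> 0")
    case True
    then show ?thesis
      using L t by (simp add: ennreal_plus)
  next
    case False
    then have "ennreal (L * ln t + L * ln y) \<le> ennreal (L * ln t)"
      by (intro ennreal_leI) simp
    then show ?thesis
      by (simp add: add_increasing2)
  qed
  finally show ?thesis .
qed

lemma obtain_closest_pair: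
  fixes c :: "'i \<Rightarrow> 'a::metric_space" and \<rho> :: "'i \<Rightarrow> real"
  assumes "finite I" "a \<in> I" "b \<in> I" "a \<noteq> b"
  obtains i i' where "i \<in> I" "i' \<in> I" "i \<noteq> i'"
    "\<And>k k'. k \<in> I \<Longrightarrow> k' \<in> I \<Longrightarrow> k \<noteq> k' \<Longrightarrow>
       dist (c i) (c i') / (\<rho> i + \<rho> i') \<le> dist (c k) (c k') / (\<rho> k + \<rho> k')"
proof -
  define P where "P = {p \<in> I \<times> I. fst p \<noteq> snd p}"
  define ratio where "ratio p = dist (c (fst p)) (c (snd p)) / (\<rho> (fst p) + \<rho> (snd p))" for p
  have "finite P" "P \<noteq> {}"
    using assms by (auto simp: P_def intro: finite_subset[of _ "I \<times> I"])
  then have "arg_min_on ratio P \<in> P" "\<And>p. p \<in> P \<Longrightarrow> ratio (arg_min_on ratio P) \<le> ratio p"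
    using arg_min_if_finite[of P ratio] by (auto simp: not_less[symmetric])
  then show ?thesis
    using that[of "fst (arg_min_on ratio P)" "snd (arg_min_on ratio P)"]
    by (auto simp: P_def ratio_def)
qed

locale sphere_lower_bound =
  fixes X :: "'a::euclidean_space set" and R0 R :: real and N :: nat
    and xs :: "nat \<Rightarrow> 'a" and lam :: "nat \<Rightarrow> real" and h :: "'a \<Rightarrow> real"
  assumes R0_pos: "0 < R0"
    and lam_nonneg: "\<And>j. j \<in> {1..N} \<Longrightarrow> 0 \<le> lam j"
    and h_measurable: "h \<in> borel_measurable
        (restrict_space borel ({y. infdist y X \<le> R0} - (\<Union>j\<in>{1..N}. cball (xs j) R)))"
    and h_sphere: "\<And>x r. x \<in> X \<Longrightarrow> 0 < r \<Longrightarrow> r \<le> R0 \<Longrightarrow>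
        (\<forall>j\<in>{1..N}. sphere x r \<inter> cball (xs j) R = {}) \<Longrightarrow>
        ennreal ((1 / r) * (\<Sum>j\<in>{j\<in>{1..N}. cball (xs j) R \<subseteq> ball x r}. lam j)) \<le> sphere_integral h x r"
begin

definition region :: "'a set" where
  "region = {y. infdist y X \<le> R0} - (\<Union>j\<in>{1..N}. cball (xs j) R)"

definition weight :: "'a \<Rightarrow> ennreal" where
  "weight y = ennreal (h y) * indicator region y"

definition mass :: "'a set \<Rightarrow> ennreal" where
  "mass V = (\<integral>\<^sup>+y\<in>V. weight y \<partial>lborel)"

definition lam_total :: real where
  "lam_total = (\<Sum>j\<in>{1..N}. lam j)"

lemma region_borel: "region \<in> sets borel"
proof -
  have "closed {y. infdist y X \<le> R0}"
    by (intro closed_Collect_le continuous_intros)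
  moreover have "closed (\<Union>j\<in>{1..N}. cball (xs j) R)"
    by (intro closed_UN) auto
  ultimately show ?thesis
    by (auto simp: region_def)
qed

lemma weight_borel_measurable [measurable]: "weight \<in> borel_measurable borel"
proof -
  have "(\<lambda>y. indicator region y *\<^sub>R h y) \<in> borel_measurable borel"
    using h_measurable region_borel by (simp add: region_def borel_measurable_restrict_space_iff)
  then have "(\<lambda>y. ennreal (indicator region y *\<^sub>R h y)) \<in> borel_measurable borel"
    by measurable
  moreover have "(\<lambda>y. ennreal (indicator region y *\<^sub>R h y)) = weight"
    by (auto simp: weight_def indicator_def)
  ultimately show ?thesis
    by simp
qed

lemma mass_mono: "V \<subseteq> V' \<Longrightarrow> mass V \<le> mass V'"
  unfolding mass_def by (intro nn_integral_mono mult_left_mono) (auto simp: indicator_def)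

lemma nn_integral_weight_sphere:
  assumes "x \<in> X" "r \<le> R0" "sphere x r \<inter> (\<Union>j\<in>{1..N}. cball (xs j) R) = {}"
  shows "(\<integral>\<^sup>+y. weight y \<partial>sphere_measure x r) = sphere_integral h x r"
  unfolding sphere_integral_def
proof (rule nn_integral_cong)
  fix y
  assume "y \<in> space (sphere_measure x r)"
  then have y: "y \<in> sphere x r"
    by (simp add: sphere_measure_def)
  then have "infdist y X \<le> R0"
    using infdist_le[OF assms(1), of y] assms(2) by (simp add: dist_commute)
  moreover have "y \<notin> (\<Union>j\<in>{1..N}. cball (xs j) R)"
    using y assms(3) by blast
  ultimately show "weight y = ennreal (h y)"
    by (simp add: weight_def region_def)
qed

lemma mass_annulus_ge:
  assumes x: "x \<in> X" and a: "0 < a" "a \<le> b" and b: "b \<le> R0" and L: "0 \<le> L"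
    and sphere_disjoint: "\<And>r. a < r \<Longrightarrow> r < b \<Longrightarrow> \<forall>j\<in>{1..N}. sphere x r \<inter> cball (xs j) R = {}"
    and L_le: "\<And>r. a < r \<Longrightarrow> r < b \<Longrightarrow> L \<le> (\<Sum>j\<in>{j\<in>{1..N}. cball (xs j) R \<subseteq> ball x r}. lam j)"
  shows "ennreal (L * ln (b / a)) \<le> mass {y. a < dist x y \<and> dist x y < b}"
proof -
  have "ennreal (L * ln (b / a)) = (\<integral>\<^sup>+r. indicator {a<..<b} r * ennreal (L / r) \<partial>lborel)"
    using a L by (simp add: nn_integral_inverse_Ioo)
  also have "\<dots> \<le> (\<integral>\<^sup>+r. indicator {a<..<b} r * (\<integral>\<^sup>+y. weight y \<partial>sphere_measure x r) \<partial>lborel)"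
  proof (intro nn_integral_mono)
    fix r :: real
    show "indicator {a<..<b} r * ennreal (L / r)
        \<le> indicator {a<..<b} r * (\<integral>\<^sup>+y. weight y \<partial>sphere_measure x r)"
    proof (cases "a < r \<and> r < b")
      case True
      then have "L / r \<le> (1 / r) * (\<Sum>j\<in>{j\<in>{1..N}. cball (xs j) R \<subseteq> ball x r}. lam j)"
        using a L_le by (simp add: divide_right_mono)
      also have "ennreal \<dots> \<le> (\<integral>\<^sup>+y. weight y \<partial>sphere_measure x r)"
        using True a b x sphere_disjoint[of r] h_sphere[of x r]
        by (subst nn_integral_weight_sphere) auto
      finally show ?thesis
        by (simp add: ennreal_leI mult_left_mono)
    qed simp
  qed
  also have "\<dots> = mass {y. a < dist x y \<and> dist x y < b}"
    unfolding mass_def using a by (simp add: nn_integral_annulus)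
  finally show ?thesis .
qed

definition cluster_cover :: "nat set \<Rightarrow> (nat \<Rightarrow> 'a) \<Rightarrow> (nat \<Rightarrow> real) \<Rightarrow> (nat \<Rightarrow> nat set) \<Rightarrow> bool" where
  "cluster_cover I c \<rho> G \<longleftrightarrow> finite I \<and> I \<noteq> {} \<and> disjoint_family_on G I \<and> (\<Union>i\<in>I. G i) = {1..N} \<and>
     (\<forall>i\<in>I. c i \<in> X \<and> 0 < \<rho> i \<and> (\<forall>j\<in>G i. cball (xs j) R \<subseteq> cball (c i) (\<rho> i)))"

lemma cluster_cover_UN: "cluster_cover I c \<rho> G \<Longrightarrow> (\<Union>i\<in>I. G i) = {1..N}"
  unfolding cluster_cover_def by blast

lemma cluster_cover_subset: "cluster_cover I c \<rho> G \<Longrightarrow> i \<in> I \<Longrightarrow> G i \<subseteq> {1..N}"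
  using cluster_cover_UN by blast

lemma cluster_cover_ball_subset:
  "cluster_cover I c \<rho> G \<Longrightarrow> i \<in> I \<Longrightarrow> j \<in> G i \<Longrightarrow> cball (xs j) R \<subseteq> cball (c i) (\<rho> i)"
  unfolding cluster_cover_def by blast

lemma cluster_cover_sum_lam:
  assumes "cluster_cover I c \<rho> G"
  shows "(\<Sum>i\<in>I. sum lam (G i)) = lam_total"
proof -
  have "finite (G i)" if "i \<in> I" for i
    using cluster_cover_subset[OF assms that] by (rule finite_subset) simp
  then have "sum lam (\<Union>i\<in>I. G i) = (\<Sum>i\<in>I. sum lam (G i))"
    using assms unfolding cluster_cover_def by (intro sum.UNION_disjoint_family) auto
  then show ?thesis
    by (simp add: cluster_cover_UN[OF assms] lam_total_def)
qed

lemma cluster_cover_cball_subset_scaled: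
  assumes "cluster_cover I c \<rho> G" "i \<in> I" "1 \<le> t"
  shows "cball (c i) (\<rho> i) \<subseteq> cball (c i) (t * \<rho> i)"
  using assms by (intro subset_cball) (simp add: cluster_cover_def)

lemma mass_cluster_annulus_ge:
  assumes cover: "cluster_cover I c \<rho> G" and t: "1 \<le> t" and i: "i \<in> I" and tR0: "t * \<rho> i \<le> R0"
    and separated: "\<And>k k'. k \<in> I \<Longrightarrow> k' \<in> I \<Longrightarrow> k \<noteq> k' \<Longrightarrow> t * (\<rho> k + \<rho> k') \<le> dist (c k) (c k')"
  shows "ennreal (sum lam (G i) * ln t) \<le> mass {y. \<rho> i < dist (c i) y \<and> dist (c i) y < t * \<rho> i}"
proof -
  have ci: "c i \<in> X" and \<rho>i: "0 < \<rho> i"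
    using cover i by (auto simp: cluster_cover_def)
  have "ennreal (sum lam (G i) * ln (t * \<rho> i / \<rho> i)) \<le> mass {y. \<rho> i < dist (c i) y \<and> dist (c i) y < t * \<rho> i}"
  proof (rule mass_annulus_ge[OF ci \<rho>i _ tR0])
    show "\<rho> i \<le> t * \<rho> i"
      using t \<rho>i by simp
    show "0 \<le> sum lam (G i)"
      using cluster_cover_subset[OF cover i] lam_nonneg by (intro sum_nonneg) auto
    fix r
    assume r: "\<rho> i < r" "r < t * \<rho> i"
    show "\<forall>j\<in>{1..N}. sphere (c i) r \<inter> cball (xs j) R = {}"
    proof
      fix j
      assume "j \<in> {1..N}"
      then obtain k where k: "k \<in> I" "j \<in> G k"
        using cluster_cover_UN[OF cover] by blast
      then have "cball (xs j) R \<subseteq> cball (c k) (\<rho> k)"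
        by (rule cluster_cover_ball_subset[OF cover])
      moreover have "sphere (c i) r \<inter> cball (c k) (\<rho> k) = {}"
      proof (cases "k = i")
        case False
        have "sphere (c i) r \<subseteq> ball (c i) (t * \<rho> i)"
          using r by auto
        then show ?thesis
          using cluster_cover_cball_subset_scaled[OF cover k(1) t] separated[OF i k(1)] False
            ball_Int_cball_eq_empty[of "t * \<rho> i" "t * \<rho> k" "c i" "c k"]
          by (auto simp: distrib_left)
      qed (use r in auto)
      ultimately show "sphere (c i) r \<inter> cball (xs j) R = {}"
        by blast
    qed
    have "G i \<subseteq> {j\<in>{1..N}. cball (xs j) R \<subseteq> ball (c i) r}"
      using cluster_cover_subset[OF cover i] cluster_cover_ball_subset[OF cover i] r
      by (fastforce simp: subset_eq)
    then show "sum lam (G i) \<le> (\<Sum>j\<in>{j\<in>{1..N}. cball (xs j) R \<subseteq> ball (c i) r}. lam j)"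
      using lam_nonneg by (intro sum_mono2) auto
  qed
  then show ?thesis
    using \<rho>i by simp
qed

lemma lam_total_nonneg: "0 \<le> lam_total"
  unfolding lam_total_def using lam_nonneg by (intro sum_nonneg) auto

lemma mass_add_sum_le:
  assumes "finite I" "W \<in> sets borel" "\<And>i. i \<in> I \<Longrightarrow> A i \<in> sets borel" "disjoint_family_on A I"
    and "W \<inter> (\<Union>i\<in>I. A i) = {}" "W \<union> (\<Union>i\<in>I. A i) \<subseteq> V"
  shows "mass W + (\<Sum>i\<in>I. mass (A i)) \<le> mass V"
proof -
  have "mass W + (\<Sum>i\<in>I. mass (A i)) = mass W + mass (\<Union>i\<in>I. A i)"
    using assms unfolding mass_def by (simp add: set_nn_integral_UN_disjoint)
  also have "\<dots> = mass (W \<union> (\<Union>i\<in>I. A i))"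
    using assms unfolding mass_def by (intro nn_integral_disjoint_pair[symmetric]) auto
  also have "\<dots> \<le> mass V"
    using assms(6) by (rule mass_mono)
  finally show ?thesis .
qed

lemma mass_growth:
  assumes cover: "cluster_cover I c \<rho> G" and t: "1 \<le> t" and tR0: "\<And>i. i \<in> I \<Longrightarrow> t * \<rho> i \<le> R0"
    and separated: "\<And>k k'. k \<in> I \<Longrightarrow> k' \<in> I \<Longrightarrow> k \<noteq> k' \<Longrightarrow> t * (\<rho> k + \<rho> k') \<le> dist (c k) (c k')"
  shows "mass (- (\<Union>i\<in>I. cball (c i) (t * \<rho> i))) + ennreal (lam_total * ln t)
    \<le> mass (- (\<Union>i\<in>I. cball (c i) (\<rho> i)))"
proof -
  define A where "A i = {y. \<rho> i < dist (c i) y \<and> dist (c i) y < t * \<rho> i}" for i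
  define W where "W = - (\<Union>i\<in>I. cball (c i) (t * \<rho> i))"
  have A_ball: "A i \<subseteq> ball (c i) (t * \<rho> i)" for i
    by (auto simp: A_def)
  have disjoint_balls: "ball (c k) (t * \<rho> k) \<inter> cball (c k') (t * \<rho> k') = {}"
    if "k \<in> I" "k' \<in> I" "k \<noteq> k'" for k k'
    using separated[OF that] by (intro ball_Int_cball_eq_empty) (simp add: distrib_left)
  have "A i \<inter> cball (c k) (\<rho> k) = {}" if "i \<in> I" "k \<in> I" for i k
    using disjoint_balls[OF that] A_ball cluster_cover_cball_subset_scaled[OF cover that(2) t]
    by (cases "i = k") (auto simp: A_def)
  then have sub: "W \<union> (\<Union>i\<in>I. A i) \<subseteq> - (\<Union>i\<in>I. cball (c i) (\<rho> i))"
    using cluster_cover_cball_subset_scaled[OF cover _ t] unfolding W_def by blast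
  have disjoint: "disjoint_family_on A I"
    unfolding disjoint_family_on_def using disjoint_balls A_ball ball_subset_cball by blast
  have W_A: "W \<inter> (\<Union>i\<in>I. A i) = {}"
    using A_ball ball_subset_cball unfolding W_def by blast
  have "closed (\<Union>i\<in>I. cball (c i) (t * \<rho> i))"
    using cover by (intro closed_UN) (auto simp: cluster_cover_def)
  then have W_borel: "W \<in> sets borel"
    unfolding W_def by (intro borel_open open_Compl)
  have A_borel: "A i \<in> sets borel" for i
    unfolding A_def by measurable
  have "0 \<le> sum lam (G i) * ln t" if "i \<in> I" for i
    using cluster_cover_subset[OF cover that] lam_nonneg t by (intro mult_nonneg_nonneg sum_nonneg) auto
  then have "ennreal (lam_total * ln t) = (\<Sum>i\<in>I. ennreal (sum lam (G i) * ln t))"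
    by (simp add: sum_ennreal cluster_cover_sum_lam[OF cover, symmetric] sum_distrib_right)
  also have "\<dots> \<le> (\<Sum>i\<in>I. mass (A i))"
    unfolding A_def using cover t tR0 separated by (intro sum_mono mass_cluster_annulus_ge)
  finally have "mass W + ennreal (lam_total * ln t) \<le> mass W + (\<Sum>i\<in>I. mass (A i))"
    by (rule add_left_mono)
  also have "\<dots> \<le> mass (- (\<Union>i\<in>I. cball (c i) (\<rho> i)))"
    using cover W_borel A_borel disjoint W_A sub by (intro mass_add_sum_le) (simp_all add: cluster_cover_def)
  finally show ?thesis
    unfolding W_def .
qed

lemma cluster_cover_Max:
  assumes "cluster_cover I c \<rho> G"
  shows "0 < Max (\<rho> ` I)" and "\<And>i. i \<in> I \<Longrightarrow> \<rho> i \<le> Max (\<rho> ` I)"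
proof -
  have fin: "finite (\<rho> ` I)" "\<rho> ` I \<noteq> {}"
    using assms by (auto simp: cluster_cover_def)
  then have "Max (\<rho> ` I) \<in> \<rho> ` I"
    by (rule Max_in)
  then obtain i where "i \<in> I" "Max (\<rho> ` I) = \<rho> i"
    by blast
  then show "0 < Max (\<rho> ` I)"
    using assms by (simp add: cluster_cover_def)
  show "\<rho> i \<le> Max (\<rho> ` I)" if "i \<in> I" for i
    using Max_ge[OF fin(1)] that by blast
qed

lemma cluster_cover_merge_absorb:
  assumes cover: "cluster_cover I c \<rho> G" and b: "b \<in> I" and t: "1 \<le> t" and i: "i \<in> I"
    and close: "dist (c a) (c b) \<le> t * (\<rho> a + \<rho> b)"
    and \<rho>'_eq: "\<rho>' = (\<lambda>i. if i = a then t * (\<rho> a + 2 * \<rho> b) else t * \<rho> i)"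
  shows "cball (c i) (t * \<rho> i) \<subseteq> cball (c (if i = b then a else i)) (\<rho>' (if i = b then a else i))"
proof (cases "i = b")
  case True
  have "dist (c a) y \<le> \<rho>' a" if "dist (c b) y \<le> t * \<rho> b" for y
    using dist_triangle[of "c a" y "c b"] close that by (simp add: \<rho>'_eq algebra_simps)
  then show ?thesis
    using True by auto
next
  case False
  have "0 < \<rho> b"
    using cover b by (simp add: cluster_cover_def)
  then have "t * \<rho> i \<le> \<rho>' i"
    using t by (simp add: \<rho>'_eq)
  then show ?thesis
    using False by (simp add: subset_cball)
qed

lemma cluster_cover_merge:
  assumes cover: "cluster_cover I c \<rho> G" and a: "a \<in> I" and b: "b \<in> I" "b \<noteq> a" and t: "1 \<le> t"
    and close: "dist (c a) (c b) \<le> t * (\<rho> a + \<rho> b)"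
    and \<rho>'_eq: "\<rho>' = (\<lambda>i. if i = a then t * (\<rho> a + 2 * \<rho> b) else t * \<rho> i)"
  shows "cluster_cover (I - {b}) c \<rho>' (G(a := G a \<union> G b))"
    and "(\<Union>i\<in>I. cball (c i) (t * \<rho> i)) \<subseteq> (\<Union>i\<in>I - {b}. cball (c i) (\<rho>' i))"
proof -
  note absorb = cluster_cover_merge_absorb[OF cover b(1) t _ close \<rho>'_eq]
  have covered: "cball (xs j) R \<subseteq> cball (c (if k = b then a else k)) (\<rho>' (if k = b then a else k))"
    if "k \<in> I" "j \<in> G k" for j k
    using cluster_cover_ball_subset[OF cover that] cluster_cover_cball_subset_scaled[OF cover that(1) t]
      absorb[OF that(1)]
    by blast
  have disjoint: "G k \<inter> G k' = {}" if "k \<in> I" "k' \<in> I" "k \<noteq> k'" for k k'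
    using cover that by (auto simp: cluster_cover_def disjoint_family_on_def)
  show "cluster_cover (I - {b}) c \<rho>' (G(a := G a \<union> G b))"
    unfolding cluster_cover_def
  proof (intro conjI ballI)
    show "finite (I - {b})" "I - {b} \<noteq> {}"
      using cover a b by (auto simp: cluster_cover_def)
    show "c i \<in> X" if "i \<in> I - {b}" for i
      using cover that by (auto simp: cluster_cover_def)
    have \<rho>_pos: "0 < \<rho> k" if "k \<in> I" for k
      using cover that by (simp add: cluster_cover_def)
    show "0 < \<rho>' i" if "i \<in> I - {b}" for i
      using that t \<rho>_pos[of i] \<rho>_pos[OF a] \<rho>_pos[OF b(1)] by (simp add: \<rho>'_eq)
    show "disjoint_family_on (G(a := G a \<union> G b)) (I - {b})"
      unfolding disjoint_family_on_def
    proof (intro ballI impI)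
      fix m n
      assume "m \<in> I - {b}" "n \<in> I - {b}" "m \<noteq> n"
      then show "(G(a := G a \<union> G b)) m \<inter> (G(a := G a \<union> G b)) n = {}"
        using disjoint[of m n] disjoint[of b n] disjoint[of m b] b by auto
    qed
    show "(\<Union>i\<in>I - {b}. (G(a := G a \<union> G b)) i) = {1..N}"
      using cluster_cover_UN[OF cover] a b by auto
    show "cball (xs j) R \<subseteq> cball (c i) (\<rho>' i)"
      if i: "i \<in> I - {b}" and j: "j \<in> (G(a := G a \<union> G b)) i" for i j
    proof -
      from j consider "i \<noteq> a" "j \<in> G i" | "i = a" "j \<in> G a" | "i = a" "j \<in> G b"
        by (auto split: if_splits)
      then show ?thesis
        using covered[of i j] covered[of a j] covered[of b j] i a b by cases simp_all
    qed
  qed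
  show "(\<Union>i\<in>I. cball (c i) (t * \<rho> i)) \<subseteq> (\<Union>i\<in>I - {b}. cball (c i) (\<rho>' i))"
  proof (rule UN_least)
    fix i
    assume i: "i \<in> I"
    then have "(if i = b then a else i) \<in> I - {b}"
      using a b by simp
    then show "cball (c i) (t * \<rho> i) \<subseteq> (\<Union>i\<in>I - {b}. cball (c i) (\<rho>' i))"
      using absorb[OF i] by blast
  qed
qed

lemma cluster_cover_merge_Max_le:
  assumes cover: "cluster_cover I c \<rho> G" and a: "a \<in> I" and b: "b \<in> I" "b \<noteq> a" and t: "1 \<le> t"
    and \<rho>'_eq: "\<rho>' = (\<lambda>i. if i = a then t * (\<rho> a + 2 * \<rho> b) else t * \<rho> i)"
  shows "Max (\<rho>' ` (I - {b})) \<le> 3 * t * Max (\<rho> ` I)"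
proof -
  define M where "M = Max (\<rho> ` I)"
  have "\<rho>' i \<le> 3 * t * M" if "i \<in> I - {b}" for i
  proof -
    have "\<rho> a \<le> M" "\<rho> b \<le> M" "\<rho> i \<le> M" "0 < M"
      using cluster_cover_Max[OF cover] that a b by (auto simp: M_def)
    then have "\<rho> a + 2 * \<rho> b \<le> 3 * M" "\<rho> i \<le> 3 * M"
      by linarith+
    then have "t * (\<rho> a + 2 * \<rho> b) \<le> t * (3 * M)" "t * \<rho> i \<le> t * (3 * M)"
      using t by (simp_all add: mult_left_mono)
    then show ?thesis
      by (simp add: \<rho>'_eq)
  qed
  moreover have "finite (\<rho>' ` (I - {b}))" "\<rho>' ` (I - {b}) \<noteq> {}"
    using cover a b by (auto simp: cluster_cover_def)
  ultimately show ?thesis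
    by (simp add: M_def)
qed

lemma obtain_contact_growth:
  assumes cover: "cluster_cover I c \<rho> G" and ab: "a \<in> I" "b \<in> I" "a \<noteq> b"
    and close: "dist (c a) (c b) < R0 / Max (\<rho> ` I) * (\<rho> a + \<rho> b)"
  obtains i i' t where "i \<in> I" "i' \<in> I" "i' \<noteq> i" "1 \<le> t" "dist (c i) (c i') \<le> t * (\<rho> i + \<rho> i')"
    "mass (- (\<Union>k\<in>I. cball (c k) (t * \<rho> k))) + ennreal (lam_total * ln t)
      \<le> mass (- (\<Union>k\<in>I. cball (c k) (\<rho> k)))"
proof -
  define M where "M = Max (\<rho> ` I)"
  have \<rho>_pos: "\<And>k. k \<in> I \<Longrightarrow> 0 < \<rho> k"
    using cover by (auto simp: cluster_cover_def)
  obtain i i' where ii': "i \<in> I" "i' \<in> I" "i \<noteq> i'" and closest: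
    "\<And>k k'. k \<in> I \<Longrightarrow> k' \<in> I \<Longrightarrow> k \<noteq> k' \<Longrightarrow>
       dist (c i) (c i') / (\<rho> i + \<rho> i') \<le> dist (c k) (c k') / (\<rho> k + \<rho> k')"
    using obtain_closest_pair[of I a b c \<rho>] cover ab by (auto simp: cluster_cover_def)
  define m where "m = dist (c i) (c i') / (\<rho> i + \<rho> i')"
  define t where "t = max 1 m" \<comment> \<open>if the closest pair already overlaps, nothing is inflated\<close>
  have separated: "m * (\<rho> k + \<rho> k') \<le> dist (c k) (c k')" if "k \<in> I" "k' \<in> I" "k \<noteq> k'" for k k'
    using closest[OF that] \<rho>_pos[OF that(1)] \<rho>_pos[OF that(2)] by (simp add: m_def pos_le_divide_eq)
  have "dist (c a) (c b) / (\<rho> a + \<rho> b) < R0 / M"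
    using close \<rho>_pos[OF ab(1)] \<rho>_pos[OF ab(2)] by (subst pos_divide_less_eq) (auto simp: M_def)
  then have "m < R0 / M"
    using closest[OF ab] unfolding m_def by linarith
  have "dist (c i) (c i') = m * (\<rho> i + \<rho> i')"
    using \<rho>_pos[OF ii'(1)] \<rho>_pos[OF ii'(2)] by (simp add: m_def)
  also have "\<dots> \<le> t * (\<rho> i + \<rho> i')"
    using \<rho>_pos[OF ii'(1)] \<rho>_pos[OF ii'(2)] by (intro mult_right_mono) (simp_all add: t_def)
  finally have "dist (c i) (c i') \<le> t * (\<rho> i + \<rho> i')" .
  moreover have "mass (- (\<Union>k\<in>I. cball (c k) (t * \<rho> k))) + ennreal (lam_total * ln t)
      \<le> mass (- (\<Union>k\<in>I. cball (c k) (\<rho> k)))"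
  proof (cases "1 \<le> m")
    case True
    have "t * \<rho> k \<le> R0" if "k \<in> I" for k
    proof -
      have "t * \<rho> k \<le> t * M"
        using cluster_cover_Max(2)[OF cover that] True by (simp add: t_def M_def)
      also have "\<dots> \<le> R0"
        using \<open>m < R0 / M\<close> cluster_cover_Max(1)[OF cover] True by (simp add: t_def M_def pos_less_divide_eq)
      finally show ?thesis .
    qed
    then show ?thesis
      using True separated by (intro mass_growth[OF cover]) (auto simp: t_def)
  qed (simp add: t_def)
  ultimately show ?thesis
    using that[of i i' t] ii' by (auto simp: t_def)
qed

lemma mass_cluster_cover_ge_separated:
  assumes cover: "cluster_cover I c \<rho> G" and M_R0: "Max (\<rho> ` I) \<le> R0"
    and separated: "\<And>i i'. i \<in> I \<Longrightarrow> i' \<in> I \<Longrightarrow> i \<noteq> i' \<Longrightarrow>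
       R0 / Max (\<rho> ` I) * (\<rho> i + \<rho> i') \<le> dist (c i) (c i')"
  shows "ennreal (lam_total * ln (R0 / (3 ^ k * Max (\<rho> ` I)))) \<le> mass (- (\<Union>i\<in>I. cball (c i) (\<rho> i)))"
proof -
  define M where "M = Max (\<rho> ` I)"
  have M_pos: "0 < M"
    using cluster_cover_Max(1)[OF cover] by (simp add: M_def)
  have t: "1 \<le> R0 / M"
    using M_R0 M_pos by (simp add: M_def)
  have "R0 / M * \<rho> i \<le> R0" if "i \<in> I" for i
    using cluster_cover_Max(2)[OF cover that] M_pos R0_pos by (simp add: M_def field_simps)
  then have growth: "mass (- (\<Union>i\<in>I. cball (c i) (R0 / M * \<rho> i))) + ennreal (lam_total * ln (R0 / M))
      \<le> mass (- (\<Union>i\<in>I. cball (c i) (\<rho> i)))"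
    using separated by (intro mass_growth[OF cover t]) (simp_all add: M_def)
  have "ennreal (lam_total * ln (R0 / (3 ^ k * M))) \<le> ennreal (lam_total * ln (R0 / M))"
    using R0_pos M_pos lam_total_nonneg
    by (intro ennreal_leI mult_left_mono ln_mono divide_left_mono) auto
  also have "\<dots> \<le> mass (- (\<Union>i\<in>I. cball (c i) (R0 / M * \<rho> i))) + ennreal (lam_total * ln (R0 / M))"
    by (simp add: add_increasing)
  also note growth
  finally show ?thesis
    by (simp add: M_def)
qed

lemma mass_cluster_cover_ge_merge:
  assumes cover: "cluster_cover I c \<rho> G" and card: "card I = Suc k"
    and ab: "a \<in> I" "b \<in> I" "a \<noteq> b" and close: "dist (c a) (c b) < R0 / Max (\<rho> ` I) * (\<rho> a + \<rho> b)"
    and IH: "\<And>I' \<rho>' G'. k = card I' \<Longrightarrow> cluster_cover I' c \<rho>' G' \<Longrightarrow>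
       ennreal (lam_total * ln (R0 / (3 ^ (card I' - 1) * Max (\<rho>' ` I'))))
       \<le> mass (- (\<Union>i\<in>I'. cball (c i) (\<rho>' i)))"
  shows "ennreal (lam_total * ln (R0 / (3 ^ k * Max (\<rho> ` I)))) \<le> mass (- (\<Union>i\<in>I. cball (c i) (\<rho> i)))"
proof -
  obtain i i' t where ii': "i \<in> I" "i' \<in> I" "i' \<noteq> i" and t: "1 \<le> t"
    and contact: "dist (c i) (c i') \<le> t * (\<rho> i + \<rho> i')"
    and growth: "mass (- (\<Union>k\<in>I. cball (c k) (t * \<rho> k))) + ennreal (lam_total * ln t)
      \<le> mass (- (\<Union>k\<in>I. cball (c k) (\<rho> k)))"
    using obtain_contact_growth[OF cover ab close] by blast
  define \<rho>' where "\<rho>' = (\<lambda>k. if k = i then t * (\<rho> i + 2 * \<rho> i') else t * \<rho> k)"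
  define M where "M = Max (\<rho> ` I)"
  define M' where "M' = Max (\<rho>' ` (I - {i'}))"
  note merged = cluster_cover_merge[OF cover ii' t contact \<rho>'_def]
  have M_pos: "0 < M" and M'_pos: "0 < M'"
    using cluster_cover_Max(1)[OF cover] cluster_cover_Max(1)[OF merged(1)] by (simp_all add: M_def M'_def)
  have "ennreal (lam_total * ln (R0 / (3 ^ (k - 1) * M'))) \<le> mass (- (\<Union>k\<in>I - {i'}. cball (c k) (\<rho>' k)))"
    using IH[OF _ merged(1)] card ii' by (simp add: M'_def)
  also have "\<dots> \<le> mass (- (\<Union>k\<in>I. cball (c k) (t * \<rho> k)))"
    using merged(2) by (intro mass_mono) blast
  finally have merged_bound: "ennreal (lam_total * ln (R0 / (3 ^ (k - 1) * M'))) \<le> mass (- (\<Union>k\<in>I. cball (c k) (t * \<rho> k)))" .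
  have "k \<noteq> 0"
    using card ii' cover card_mono[of I "{i, i'}"] by (auto simp: cluster_cover_def)
  then have "3 ^ (k - 1) * M' \<le> t * (3 ^ k * M)"
    using cluster_cover_merge_Max_le[OF cover ii' t \<rho>'_def] by (cases k) (simp_all add: M_def M'_def)
  then have "R0 / (3 ^ k * M) \<le> t * (R0 / (3 ^ (k - 1) * M'))"
    using R0_pos M_pos M'_pos t by (simp add: field_simps mult_left_mono)
  then have "ennreal (lam_total * ln (R0 / (3 ^ k * M)))
      \<le> ennreal (lam_total * ln t) + ennreal (lam_total * ln (R0 / (3 ^ (k - 1) * M')))"
    using R0_pos M_pos M'_pos by (intro ennreal_mult_ln_le_add[OF lam_total_nonneg t]) simp_all
  also have "\<dots> \<le> ennreal (lam_total * ln t) + mass (- (\<Union>k\<in>I. cball (c k) (t * \<rho> k)))"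
    using merged_bound by (rule add_left_mono)
  also have "\<dots> \<le> mass (- (\<Union>k\<in>I. cball (c k) (\<rho> k)))"
    using growth by (simp add: add.commute)
  finally show ?thesis
    by (simp add: M_def)
qed

lemma mass_cluster_cover_ge:
  assumes "cluster_cover I c \<rho> G"
  shows "ennreal (lam_total * ln (R0 / (3 ^ (card I - 1) * Max (\<rho> ` I))))
    \<le> mass (- (\<Union>i\<in>I. cball (c i) (\<rho> i)))"
  using assms
proof (induction "card I" arbitrary: I \<rho> G)
  case 0
  then show ?case
    by (simp add: cluster_cover_def)
next
  case (Suc k)
  define M where "M = Max (\<rho> ` I)"
  have card: "card I = Suc k"
    using Suc.hyps(2) by simp
  have "0 < M"
    using cluster_cover_Max(1)[OF Suc.prems] by (simp add: M_def)
  show ?case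
  proof (cases "R0 \<le> 3 ^ k * M")
    case True
    then have "lam_total * ln (R0 / (3 ^ k * M)) \<le> 0"
      using R0_pos \<open>0 < M\<close> lam_total_nonneg by (intro mult_nonneg_nonpos) auto
    then show ?thesis
      by (simp add: card M_def[symmetric] ennreal_neg)
  next
    case False
    show ?thesis
    proof (cases "\<exists>a\<in>I. \<exists>b\<in>I. a \<noteq> b \<and> dist (c a) (c b) < R0 / M * (\<rho> a + \<rho> b)")
      case True
      then obtain a b where "a \<in> I" "b \<in> I" "a \<noteq> b" "dist (c a) (c b) < R0 / M * (\<rho> a + \<rho> b)"
        by blast
      then show ?thesis
        using mass_cluster_cover_ge_merge[OF Suc.prems Suc.hyps(2)[symmetric] _ _ _ _ Suc.hyps(1)]
        by (simp add: card M_def)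
    next
      case separated: False
      have "M \<le> 3 ^ k * M"
        using \<open>0 < M\<close> mult_right_mono[of 1 "3 ^ k" M] by simp
      with False have "M \<le> R0"
        by linarith
      moreover have "R0 / M * (\<rho> i + \<rho> i') \<le> dist (c i) (c i')" if "i \<in> I" "i' \<in> I" "i \<noteq> i'" for i i'
        using separated that by (auto simp: not_less)
      ultimately have "ennreal (lam_total * ln (R0 / (3 ^ k * M))) \<le> mass (- (\<Union>i\<in>I. cball (c i) (\<rho> i)))"
        unfolding M_def by (rule mass_cluster_cover_ge_separated[OF Suc.prems])
      then show ?thesis
        by (simp add: card M_def)
    qed
  qed
qed

end

theorem lemma9p3:
  fixes X :: "'a::euclidean_space set"
    and R0 R :: real and N :: nat
    and xs :: "nat \<Rightarrow> 'a" and lam :: "nat \<Rightarrow> real" and h :: "'a \<Rightarrow> real"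
  assumes dim: "DIM('a) \<ge> 2"
    and R0: "R0 > 0"
    and N: "N \<ge> 1"
    and R: "0 < R" "R \<le> 3 powr (1 - real N) * R0"
    and xs: "\<And>j. j \<in> {1..N} \<Longrightarrow> xs j \<in> X"
    and lam: "\<And>j. j \<in> {1..N} \<Longrightarrow> lam j \<ge> 0"
    and h_meas: "h \<in> borel_measurable
        (restrict_space borel ({y. infdist y X \<le> R0} - (\<Union>j\<in>{1..N}. cball (xs j) R)))"
    and h_nonneg: "\<And>y. y \<in> {y. infdist y X \<le> R0} - (\<Union>j\<in>{1..N}. cball (xs j) R) \<Longrightarrow> h y \<ge> 0"
    and h_sphere: "\<And>x r. x \<in> X \<Longrightarrow> 0 < r \<Longrightarrow> r \<le> R0 \<Longrightarrow>
        (\<forall>j\<in>{1..N}. sphere x r \<inter> cball (xs j) R = {}) \<Longrightarrow>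
        sphere_integral h x r \<ge>
          ennreal ((1 / r) * (\<Sum>j\<in>{j\<in>{1..N}. cball (xs j) R \<subseteq> ball x r}. lam j))"
  shows "(\<integral>\<^sup>+ y. ennreal (h y) *
            indicator ({y. infdist y X \<le> R0} - (\<Union>j\<in>{1..N}. cball (xs j) R)) y \<partial>lborel)
         \<ge> ennreal (ln (R0 / (3 ^ (N - 1) * R)) * (\<Sum>j\<in>{1..N}. lam j))"
proof -
  interpret sphere_lower_bound X R0 R N xs lam h
    using R0 lam h_meas h_sphere by unfold_locales
  have "cluster_cover {1..N} xs (\<lambda>_. R) (\<lambda>j. {j})"
    using xs N R(1) by (auto simp: cluster_cover_def disjoint_family_on_def)
  from mass_cluster_cover_ge[OF this]
  have "ennreal (lam_total * ln (R0 / (3 ^ (N - 1) * R))) \<le> mass (- (\<Union>j\<in>{1..N}. cball (xs j) R))"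
    using N by simp
  also have "\<dots> = (\<integral>\<^sup>+y. ennreal (h y) * indicator region y \<partial>lborel)"
    unfolding mass_def weight_def by (intro nn_integral_cong) (auto simp: region_def indicator_def)
  finally show ?thesis
    by (simp add: lam_total_def region_def mult.commute)
qed

end
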